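(* Let $M$ be a finite index set with positive, not necessarily normalized, weights $w^r>0$ for $r\in M$. Put $\eta=\sum_{r\in M}w^r$ and $\mathcal{H}=-\sum_{r\in M}\frac{w^r}{\eta}\log\big(\frac{w^r}{\eta}\big)$. Let $M^s\subseteq M$ be nonempty with $|\neg M^s|>2$, where $\neg M^s=M\setminus M^s$. Define $w^{m,s}=\sum_{m\in M^s}w^m$, $w^{s,r}=w^r/w^{m,s}$ for $r\in M^s$, and $\mathcal{H}^s=-\sum_{r\in M^s}w^{s,r}\log(w^{s,r})$. Let $\mathcal{LB}[\eta]$ and $\mathcal{UB}[\eta]$ be real numbers with $0<\mathcal{LB}[\eta]\le\eta\le\mathcal{UB}[\eta]$, and set $$\bar\gamma=1-\sum_{r\in M^s}\frac{w^r}{\mathcal{UB}[\eta]}.$$ Then $\mathcal{LB}[\mathcal{H}]\le\mathcal{H}\le\mathcal{UB}[\mathcal{H}]$, where $$\mathcal{LB}[\mathcal{H}]=\frac{w^{m,s}}{\mathcal{UB}[\eta]}\Big[\mathcal{H}^s+\log\Big(\frac{\mathcal{LB}[\eta]}{w^{m,s}}\Big)\Big],$$ $$\mathcal{UB}[\mathcal{H}]=\frac{w^{m,s}}{\mathcal{LB}[\eta]}\Big[\mathcal{H}^s+\log\Big(\frac{\mathcal{UB}[\eta]}{w^{m,s}}\Big)\Big]-\bar\gamma\log\Big(\frac{\bar\gamma}{|\neg M^s|}\Big).$$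
   Context: Setting: a node of a planning belief tree holds a mixture belief with component set $M$ (data-association hypotheses) and unnormalized weights $w^r$. The cost $\mathcal{H}$ is the Shannon entropy of the normalized weights. The subset $M^s$ defines a simplified belief with renormalized weights $w^{s,r}$ and entropy $\mathcal{H}^s$. Computing $\eta$ requires all weights, so only lower and upper bounds $\mathcal{LB}[\eta]$ and $\mathcal{UB}[\eta]$ on it are assumed to be available. All logarithms use the same base. *)

theory Defs
  imports "HOL-Analysis.Analysis"
begin

end

theory Submission
  imports Defs
begin

text \<open>
  Splitting the mixture into the simplified part \<open>Ms\<close> and its complement, the entropy becomes
  \<open>W/\<eta> (Hs + log (\<eta>/W)) + E\<close>, where \<open>W\<close> is the mass of \<open>Ms\<close> and \<open>E \<ge> 0\<close> is the contribution of
  the complement. The first summand is squeezed between the two bounds by replacing \<open>\<eta>\<close> with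
  \<open>LB_eta\<close> or \<open>UB_eta\<close>. For the upper bound, \<open>E\<close> is at most the entropy of the uniform
  distribution of the same mass \<open>1 - W/\<eta>\<close> on the complement; since \<open>-x log (x/n)\<close> is increasing
  for \<open>x \<le> n/e\<close>, that mass may be replaced by the larger \<open>\<gamma> = 1 - W/UB_eta\<close>, and this is where
  \<open>card (M - Ms) > 2\<close> is needed.
\<close>

definition entropy :: "real \<Rightarrow> 'a set \<Rightarrow> ('a \<Rightarrow> real) \<Rightarrow> real" where
  "entropy b A p = - (\<Sum>r\<in>A. p r * log b (p r))"

lemma entropy_nonneg:
  assumes "b > 1" "finite A" "\<And>r. r \<in> A \<Longrightarrow> 0 \<le> p r" "sum p A \<le> 1"
  shows "0 \<le> entropy b A p"
proof -
  have "p r * log b (p r) \<le> 0" if r: "r \<in> A" for r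
  proof -
    have "p r \<le> sum p A"
      using assms(3) by (intro member_le_sum[OF r _ assms(2)]) auto
    with assms(1,4) have "log b (p r) \<le> 0" if "p r > 0"
      using that by simp
    with assms(3)[OF r] show ?thesis
      by (cases "p r = 0") (auto intro: mult_nonneg_nonpos)
  qed
  then show ?thesis
    unfolding entropy_def by (simp add: sum_nonpos)
qed

lemma log_le_minus_one_div_ln:
  fixes b x :: real
  assumes "b > 1" "x > 0"
  shows "log b x \<le> (x - 1) / ln b"
  using assms ln_le_minus_one[of x] by (simp add: log_def divide_right_mono)

lemma entropy_le_uniform:
  assumes "b > 1" "finite A" "A \<noteq> {}" "\<And>r. r \<in> A \<Longrightarrow> 0 < p r"
  shows "entropy b A p \<le> - sum p A * log b (sum p A / card A)"
proof -
  define q where "q = sum p A / card A"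
  have "q > 0"
    using assms by (simp add: q_def sum_pos card_gt_0_iff)
  have "ln b > 0"
    using assms(1) by simp
  have "(\<Sum>r\<in>A. p r * (log b q - log b (p r))) \<le> (\<Sum>r\<in>A. (q - p r) / ln b)"
  proof (rule sum_mono)
    fix r assume "r \<in> A"
    then have "p r > 0" by (rule assms(4))
    then have "p r * (log b q - log b (p r)) = p r * log b (q / p r)"
      using \<open>q > 0\<close> assms(1) by (simp add: log_divide)
    also have "\<dots> \<le> p r * ((q / p r - 1) / ln b)"
      using \<open>p r > 0\<close> \<open>q > 0\<close> assms(1) by (intro mult_left_mono log_le_minus_one_div_ln) auto
    also have "\<dots> = (q - p r) / ln b"
      using \<open>p r > 0\<close> \<open>ln b > 0\<close> by (simp add: field_simps)
    finally show "p r * (log b q - log b (p r)) \<le> (q - p r) / ln b" .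
  qed
  also have "\<dots> = 0"
    using assms(2,3) by (simp add: q_def sum_divide_distrib[symmetric] sum_subtractf)
  finally show ?thesis
    by (simp add: entropy_def q_def right_diff_distrib sum_subtractf sum_distrib_right[symmetric])
qed

text \<open>The derivative \<open>(ln (n/x) - 1) / ln b\<close> of \<open>x \<mapsto> -x log (x/n)\<close> is nonnegative for \<open>x \<le> n/e\<close>.\<close>

lemma neg_mult_log_divide_mono:
  fixes b n x y :: real
  assumes "b > 1" "0 < x" "x \<le> y" "exp 1 * y \<le> n"
  shows "- x * log b (x / n) \<le> - y * log b (y / n)"
proof -
  have "y > 0"
    using assms(2,3) by linarith
  then have "n > 0"
    using assms(4) exp_gt_zero[of 1] by (smt (verit) mult_pos_pos)
  have concave: "x - y \<le> x * ln (x / y)"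
  proof -
    have "ln (y / x) \<le> y / x - 1"
      using assms(2) \<open>y > 0\<close> by (intro ln_le_minus_one) simp
    then have "x * (1 - y / x) \<le> x * ln (x / y)"
      using assms(2) \<open>y > 0\<close> by (simp add: ln_div)
    then show ?thesis
      using assms(2) by (simp add: algebra_simps)
  qed
  have "exp 1 \<le> n / y"
    using assms(4) \<open>y > 0\<close> by (simp add: field_simps)
  then have "1 \<le> ln (n / y)"
    using \<open>y > 0\<close> \<open>n > 0\<close> by (simp add: ln_ge_iff)
  have "- x * ln (x / n) = - x * ln (x / y) + x * ln (n / y)"
    using assms(2) \<open>y > 0\<close> \<open>n > 0\<close> by (simp add: ln_div algebra_simps)
  also have "\<dots> \<le> (y - x) * ln (n / y) + x * ln (n / y)"
    using concave mult_left_mono[OF \<open>1 \<le> ln (n / y)\<close>, of "y - x"] assms(3) by simp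
  also have "\<dots> = - y * ln (y / n)"
    using \<open>y > 0\<close> \<open>n > 0\<close> by (simp add: ln_div algebra_simps)
  finally show ?thesis
    using assms(1) by (simp add: log_def divide_right_mono)
qed

lemma entropy_le_of_mass_le:
  assumes "b > 1" "finite A" "A \<noteq> {}" "\<And>r. r \<in> A \<Longrightarrow> 0 < p r"
    and "sum p A \<le> g" "exp 1 * g \<le> card A"
  shows "entropy b A p \<le> - g * log b (g / card A)"
proof -
  have "0 < sum p A"
    using assms(2-4) by (simp add: sum_pos)
  have "entropy b A p \<le> - sum p A * log b (sum p A / card A)"
    using assms(1-4) by (rule entropy_le_uniform)
  also have "\<dots> \<le> - g * log b (g / card A)"
    using assms \<open>0 < sum p A\<close> by (intro neg_mult_log_divide_mono) auto
  finally show ?thesis .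
qed

lemma entropy_rescale:
  assumes "b > 1" "finite A" "A \<noteq> {}" "\<And>r. r \<in> A \<Longrightarrow> 0 < w r" "c > 0"
  shows "entropy b A (\<lambda>r. w r / c)
    = sum w A / c * (entropy b A (\<lambda>r. w r / sum w A) + log b (c / sum w A))"
proof -
  define W where "W = sum w A"
  have "W > 0"
    using assms(2-4) by (simp add: W_def sum_pos)
  have "w r / c * log b (w r / c) = W / c * (w r / W * log b (w r / W)) - w r / c * log b (c / W)"
    if "r \<in> A" for r
  proof -
    have "w r / c * log b (w r / c) = w r / c * (log b (w r / W) - log b (c / W))"
      using assms(1,5) assms(4)[OF that] \<open>W > 0\<close> by (simp add: log_divide)
    also have "\<dots> = W / c * (w r / W * log b (w r / W)) - w r / c * log b (c / W)"
      using \<open>W > 0\<close> assms(5) by (simp add: field_simps)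
    finally show ?thesis .
  qed
  then have "(\<Sum>r\<in>A. w r / c * log b (w r / c))
      = W / c * (\<Sum>r\<in>A. w r / W * log b (w r / W)) - W / c * log b (c / W)"
    by (simp add: sum_subtractf sum_distrib_left sum_distrib_right[symmetric]
        sum_divide_distrib[symmetric] W_def)
  then show ?thesis
    by (simp add: entropy_def W_def algebra_simps)
qed

lemma entropy_normalized_nonneg:
  assumes "b > 1" "finite M" "A \<subseteq> M" "\<And>r. r \<in> M \<Longrightarrow> 0 \<le> w r"
  shows "0 \<le> entropy b A (\<lambda>r. w r / sum w M)"
proof (rule entropy_nonneg)
  have "sum w A \<le> sum w M" "0 \<le> sum w M"
    using assms(2-4) by (auto intro: sum_mono2 sum_nonneg)
  then show "(\<Sum>r\<in>A. w r / sum w M) \<le> 1"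
    by (cases "sum w M = 0") (simp_all add: sum_divide_distrib[symmetric] divide_le_eq_1)
  show "0 \<le> w r / sum w M" if "r \<in> A" for r
    using assms(3,4) \<open>0 \<le> sum w M\<close> that by auto
qed (use assms finite_subset in auto)

lemma entropy_normalized_split:
  assumes "b > 1" "finite M" "Ms \<subseteq> M" "Ms \<noteq> {}" "\<And>r. r \<in> M \<Longrightarrow> 0 < w r"
  shows "entropy b M (\<lambda>r. w r / sum w M)
    = sum w Ms / sum w M * (entropy b Ms (\<lambda>r. w r / sum w Ms) + log b (sum w M / sum w Ms))
      + entropy b (M - Ms) (\<lambda>r. w r / sum w M)"
proof -
  have "finite Ms"
    using assms(3,2) by (rule finite_subset)
  have "0 < sum w M"
    using assms(2-5) by (intro sum_pos) auto
  have "entropy b M (\<lambda>r. w r / sum w M)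
      = entropy b Ms (\<lambda>r. w r / sum w M) + entropy b (M - Ms) (\<lambda>r. w r / sum w M)"
    using sum.subset_diff[OF assms(3,2), of "\<lambda>r. w r / sum w M * log b (w r / sum w M)"]
    unfolding entropy_def by linarith
  with entropy_rescale[of b Ms w "sum w M"] show ?thesis
    using assms \<open>finite Ms\<close> \<open>0 < sum w M\<close> by auto
qed

lemma entropy_complement_le:
  assumes "b > 1" "finite M" "Ms \<subseteq> M" "\<And>r. r \<in> M \<Longrightarrow> 0 < w r"
    and "sum w M \<le> U" "2 < card (M - Ms)"
  defines "\<gamma> \<equiv> 1 - (\<Sum>r\<in>Ms. w r / U)"
  shows "entropy b (M - Ms) (\<lambda>r. w r / sum w M) \<le> - \<gamma> * log b (\<gamma> / card (M - Ms))"
proof (rule entropy_le_of_mass_le)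
  have "finite (M - Ms)" "3 \<le> real (card (M - Ms))"
    using assms(2,6) by auto
  moreover have "M - Ms \<noteq> {}"
    using assms(6) by (metis card.empty not_less_zero)
  ultimately have "0 < sum w (M - Ms)"
    using assms(4) by (intro sum_pos) auto
  moreover have "0 \<le> sum w Ms"
    using assms(3,4) by (intro sum_nonneg) (auto simp: less_imp_le)
  moreover have mass: "sum w M = sum w Ms + sum w (M - Ms)"
    using sum.subset_diff[OF assms(3,2), of w] by linarith
  ultimately have "sum w Ms / U \<le> sum w Ms / sum w M" "0 \<le> sum w Ms / U"
    using assms(5) by (auto intro: divide_left_mono)
  moreover have "\<gamma> = 1 - sum w Ms / U"
    by (simp add: \<gamma>_def sum_divide_distrib)
  moreover have "(\<Sum>r\<in>M - Ms. w r / sum w M) = 1 - sum w Ms / sum w M"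
    using mass \<open>0 < sum w (M - Ms)\<close> \<open>0 \<le> sum w Ms\<close>
    by (simp add: sum_divide_distrib[symmetric] field_simps)
  ultimately have "(\<Sum>r\<in>M - Ms. w r / sum w M) \<le> \<gamma>" "\<gamma> \<le> 1"
    by auto
  then show "(\<Sum>r\<in>M - Ms. w r / sum w M) \<le> \<gamma>"
    by blast
  have "exp 1 * \<gamma> \<le> exp 1"
    using \<open>\<gamma> \<le> 1\<close> by simp
  with exp_le \<open>3 \<le> real (card (M - Ms))\<close> show "exp 1 * \<gamma> \<le> card (M - Ms)"
    by linarith
  show "0 < w r / sum w M" if "r \<in> M - Ms" for r
    using assms(4) that mass \<open>0 < sum w (M - Ms)\<close> \<open>0 \<le> sum w Ms\<close> by auto
qed (use assms in auto)

lemma mult_mono_nonneg_upper: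
  fixes a a' t t' :: real
  assumes "0 \<le> a" "a \<le> a'" "t \<le> t'" "0 \<le> t'"
  shows "a * t \<le> a' * t'"
proof (cases "0 \<le> t")
  case True
  then show ?thesis
    using assms by (intro mult_mono) auto
next
  case False
  then have "a * t \<le> 0"
    using assms(1) by (simp add: mult_nonneg_nonpos)
  also have "0 \<le> a' * t'"
    using assms by simp
  finally show ?thesis .
qed

text \<open>\<open>W/c (h + log (c/W))\<close> is the contribution of a part of mass \<open>W\<close> and conditional entropy \<open>h\<close>
  to the entropy of a mixture with normalizer \<open>c\<close>.\<close>

lemma part_entropy_normalizer_bounds:
  fixes b h W L c U :: real
  assumes "b > 1" "0 < W" "W \<le> c" "0 < L" "L \<le> c" "c \<le> U" "0 \<le> h"
  shows "W / U * (h + log b (L / W)) \<le> W / c * (h + log b (c / W))"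
    and "W / c * (h + log b (c / W)) \<le> W / L * (h + log b (U / W))"
  using assms by (auto intro!: mult_mono_nonneg_upper simp: frac_le divide_right_mono)

theorem theorem2:
  fixes M Ms :: "'a set" and w :: "'a \<Rightarrow> real" and b LB_eta UB_eta :: real
  assumes "finite M"
    and "\<And>r. r \<in> M \<Longrightarrow> w r > 0"
    and "b > 1"
    and "Ms \<subseteq> M" and "Ms \<noteq> {}"
    and "card (M - Ms) > 2"
    and "0 < LB_eta" and "LB_eta \<le> (\<Sum>r\<in>M. w r)" and "(\<Sum>r\<in>M. w r) \<le> UB_eta"
  shows
    "let \<eta> = (\<Sum>r\<in>M. w r);
         H = - (\<Sum>r\<in>M. (w r / \<eta>) * log b (w r / \<eta>));
         wms = (\<Sum>m\<in>Ms. w m);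
         Hs = - (\<Sum>r\<in>Ms. (w r / wms) * log b (w r / wms));
         \<gamma> = 1 - (\<Sum>r\<in>Ms. w r / UB_eta);
         LB_H = wms / UB_eta * (Hs + log b (LB_eta / wms));
         UB_H = wms / LB_eta * (Hs + log b (UB_eta / wms))
                - \<gamma> * log b (\<gamma> / real (card (M - Ms)))
     in LB_H \<le> H \<and> H \<le> UB_H"
proof -
  define \<eta> where "\<eta> = (\<Sum>r\<in>M. w r)"
  define W where "W = (\<Sum>m\<in>Ms. w m)"
  define \<gamma> where "\<gamma> = 1 - (\<Sum>r\<in>Ms. w r / UB_eta)"
  define Hs where "Hs = entropy b Ms (\<lambda>r. w r / W)"
  define E where "E = entropy b (M - Ms) (\<lambda>r. w r / \<eta>)"
  have "finite Ms"
    using assms(4,1) by (rule finite_subset)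
  have w_nonneg: "\<And>r. r \<in> M \<Longrightarrow> 0 \<le> w r"
    using assms(2) by (simp add: less_imp_le)
  have "0 < W"
    using assms(2,4,5) \<open>finite Ms\<close> by (auto simp: W_def intro!: sum_pos)
  have "W \<le> \<eta>"
    unfolding W_def \<eta>_def using assms(1,4) w_nonneg by (intro sum_mono2) auto
  have H: "entropy b M (\<lambda>r. w r / \<eta>) = W / \<eta> * (Hs + log b (\<eta> / W)) + E"
    using entropy_normalized_split[OF assms(3,1,4,5,2)] by (simp add: \<eta>_def W_def Hs_def E_def)
  have "0 \<le> Hs"
    using entropy_normalized_nonneg[OF assms(3) \<open>finite Ms\<close> order_refl] w_nonneg assms(4)
    by (auto simp: Hs_def W_def)
  have "0 \<le> E"
    using entropy_normalized_nonneg[OF assms(3,1) Diff_subset w_nonneg] by (simp add: E_def \<eta>_def)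
  moreover have "E \<le> - \<gamma> * log b (\<gamma> / card (M - Ms))"
    using entropy_complement_le[OF assms(3,1,4,2,9,6)] by (simp add: E_def \<gamma>_def \<eta>_def)
  moreover note part_entropy_normalizer_bounds[OF assms(3) \<open>0 < W\<close> \<open>W \<le> \<eta>\<close> assms(7)
      assms(8,9)[folded \<eta>_def] \<open>0 \<le> Hs\<close>]
  ultimately show ?thesis
    using H[unfolded entropy_def]
    unfolding Let_def \<eta>_def[symmetric] W_def[symmetric] \<gamma>_def[symmetric]
      Hs_def[unfolded entropy_def, symmetric]
    by (intro conjI; linarith)
qed

end
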